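(* Let $I\in\{0,1\}^{n\times m}$, $C\subseteq X$, $D\subseteq Y$ with $I_{ij}=1$ for every $i\in C$ and $j\in D$, and let $J$ be the restriction of $I$ to $D^{\downarrow_I}\times C^{\uparrow_I}$ (i.e. $J\subseteq D^{\downarrow_I}\times C^{\uparrow_I}$ with $\langle i,j\rangle\in J$ iff $I_{ij}=1$). Then $\mathcal{I}_{C,D}=\mathcal{B}(D^{\downarrow_I},C^{\uparrow_I},J)$.
   Context: $X=\{1,\dots,n\}$, $Y=\{1,\dots,m\}$. For a binary relation (formal context) $K\subseteq X'\times Y'$ between sets $X'$ and $Y'$, and $C\subseteq X'$, $D\subseteq Y'$: $C^{\uparrow_K}=\{j\in Y'\mid \forall i\in C: \langle i,j\rangle\in K\}$, $D^{\downarrow_K}=\{i\in X'\mid \forall j\in D: \langle i,j\rangle\in K\}$, and $\mathcal{B}(X',Y',K)=\{\langle C,D\rangle\mid C\subseteq X', D\subseteq Y', C^{\uparrow_K}=D, D^{\downarrow_K}=C\}$. The matrix $I$ is identified with the relation $\{\langle i,j\rangle\mid I_{ij}=1\}\subseteq X\times Y$, and $\mathcal{B}(I)=\mathcal{B}(X,Y,I)$, ordered by $\langle C_1,D_1\rangle\leq\langle C_2,D_2\rangle$ iff $C_1\subseteq C_2$. $\gamma(C)=\langle C^{\uparrow_I\downarrow_I},C^{\uparrow_I}\rangle$, $\mu(D)=\langle D^{\downarrow_I},D^{\downarrow_I\uparrow_I}\rangle$, and $\mathcal{I}_{C,D}=\{c\in\mathcal{B}(I)\mid\gamma(C)\leq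 c\leq\mu(D)\}$. *)

theory Defs
  imports Main
begin

definition up :: "('a \<times> 'b) set \<Rightarrow> 'b set \<Rightarrow> 'a set \<Rightarrow> 'b set" where
  "up K Y' C = {j \<in> Y'. \<forall>i\<in>C. (i, j) \<in> K}"

definition down :: "('a \<times> 'b) set \<Rightarrow> 'a set \<Rightarrow> 'b set \<Rightarrow> 'a set" where
  "down K X' D = {i \<in> X'. \<forall>j\<in>D. (i, j) \<in> K}"

definition concepts :: "'a set \<Rightarrow> 'b set \<Rightarrow> ('a \<times> 'b) set \<Rightarrow> ('a set \<times> 'b set) set" where
  "concepts X' Y' K = {(C, D). C \<subseteq> X' \<and> D \<subseteq> Y' \<and> up K Y' C = D \<and> down K X' D = C}"

definition concept_le :: "('a set \<times> 'b set) \<Rightarrow> ('a set \<times> 'b set) \<Rightarrow> bool" where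
  "concept_le c1 c2 \<longleftrightarrow> fst c1 \<subseteq> fst c2"

definition Xs :: "nat \<Rightarrow> nat set" where "Xs n = {1..n}"
definition Ys :: "nat \<Rightarrow> nat set" where "Ys m = {1..m}"

definition gamma :: "nat \<Rightarrow> nat \<Rightarrow> (nat \<times> nat) set \<Rightarrow> nat set \<Rightarrow> nat set \<times> nat set" where
  "gamma n m I C = (down I (Xs n) (up I (Ys m) C), up I (Ys m) C)"

definition mu :: "nat \<Rightarrow> nat \<Rightarrow> (nat \<times> nat) set \<Rightarrow> nat set \<Rightarrow> nat set \<times> nat set" where
  "mu n m I D = (down I (Xs n) D, up I (Ys m) (down I (Xs n) D))"

definition interval :: "nat \<Rightarrow> nat \<Rightarrow> (nat \<times> nat) set \<Rightarrow> nat set \<Rightarrow> nat set \<Rightarrow> (nat set \<times> nat set) set" where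
  "interval n m I C D = {c \<in> concepts (Xs n) (Ys m) I. concept_le (gamma n m I C) c \<and> concept_le c (mu n m I D)}"

end

theory Submission
  imports Defs
begin

text \<open>Both sides of the equation consist of the concepts \<open>(E, F)\<close> of \<open>I\<close> with \<open>C \<subseteq> E\<close> and
  \<open>D \<subseteq> F\<close>. For the interval this is the Galois connection between the two concept-forming
  operators. For the subcontext it holds because, on \<open>D\<^sup>\<down> \<times> C\<^sup>\<up>\<close>, the operators of \<open>J\<close> are those of
  \<open>I\<close> intersected with \<open>C\<^sup>\<up>\<close> resp. \<open>D\<^sup>\<down>\<close>, and for such concepts the intersection changes nothing.\<close>

lemma subset_down_iff:
  "C \<subseteq> X' \<Longrightarrow> C \<subseteq> down K X' D \<longleftrightarrow> C \<times> D \<subseteq> K"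
  unfolding down_def by auto

lemma subset_up_iff:
  "D \<subseteq> Y' \<Longrightarrow> D \<subseteq> up K Y' C \<longleftrightarrow> C \<times> D \<subseteq> K"
  unfolding up_def by auto

lemma up_antimono: "C \<subseteq> C' \<Longrightarrow> up K Y' C' \<subseteq> up K Y' C"
  unfolding up_def by auto

lemma down_antimono: "D \<subseteq> D' \<Longrightarrow> down K X' D' \<subseteq> down K X' D"
  unfolding down_def by auto

lemma up_subset: "up K Y' C \<subseteq> Y'"
  unfolding up_def by auto

lemma down_subset: "down K X' D \<subseteq> X'"
  unfolding down_def by auto

lemma up_restrict:
  "C \<subseteq> A \<Longrightarrow> B \<subseteq> Y' \<Longrightarrow> up (K \<inter> A \<times> B) B C = up K Y' C \<inter> B"
  unfolding up_def by auto

lemma down_restrict: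
  "D \<subseteq> B \<Longrightarrow> A \<subseteq> X' \<Longrightarrow> down (K \<inter> A \<times> B) A D = down K X' D \<inter> A"
  unfolding down_def by auto

lemma subset_down_up: "C \<subseteq> X' \<Longrightarrow> C \<subseteq> down K X' (up K Y' C)"
  unfolding down_def up_def by auto

lemma concept_closure_subset_iff:
  assumes "(E, F) \<in> concepts X' Y' K" and "C \<subseteq> X'"
  shows "down K X' (up K Y' C) \<subseteq> E \<longleftrightarrow> C \<subseteq> E"
proof
  assume "down K X' (up K Y' C) \<subseteq> E"
  with subset_down_up[OF assms(2)] show "C \<subseteq> E" by (rule subset_trans)
next
  assume "C \<subseteq> E"
  then have "down K X' (up K Y' C) \<subseteq> down K X' (up K Y' E)"
    by (intro down_antimono up_antimono)
  also have "down K X' (up K Y' E) = E"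
    using assms(1) unfolding concepts_def by simp
  finally show "down K X' (up K Y' C) \<subseteq> E" .
qed

lemma concept_subset_down_iff:
  assumes "(E, F) \<in> concepts X' Y' K" and "D \<subseteq> Y'"
  shows "E \<subseteq> down K X' D \<longleftrightarrow> D \<subseteq> F"
proof -
  have "E \<subseteq> X'" and "up K Y' E = F" using assms(1) unfolding concepts_def by auto
  then show ?thesis using subset_down_iff[of E X' K D] subset_up_iff[OF assms(2), of K E] by simp
qed

lemma interval_iff:
  assumes "C \<subseteq> Xs n" and "D \<subseteq> Ys m"
  shows "(E, F) \<in> interval n m I C D \<longleftrightarrow>
    (E, F) \<in> concepts (Xs n) (Ys m) I \<and> C \<subseteq> E \<and> D \<subseteq> F"
proof -
  have "concept_le (gamma n m I C) (E, F) \<and> concept_le (E, F) (mu n m I D) \<longleftrightarrow>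
      C \<subseteq> E \<and> D \<subseteq> F" if "(E, F) \<in> concepts (Xs n) (Ys m) I"
    unfolding concept_le_def gamma_def mu_def
    using concept_closure_subset_iff[OF that assms(1)] concept_subset_down_iff[OF that assms(2)]
    by simp
  then show ?thesis unfolding interval_def by blast
qed

lemma concepts_restrict_iff:
  assumes "C \<subseteq> X'" and "D \<subseteq> Y'" and "C \<times> D \<subseteq> K"
  defines "A \<equiv> down K X' D" and "B \<equiv> up K Y' C"
  shows "(E, F) \<in> concepts A B (K \<inter> A \<times> B) \<longleftrightarrow>
    (E, F) \<in> concepts X' Y' K \<and> C \<subseteq> E \<and> D \<subseteq> F"
proof -
  have CA: "C \<subseteq> A" and DB: "D \<subseteq> B"
    using assms subset_down_iff[of C X' K D] subset_up_iff[of D Y' K C]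
    unfolding A_def B_def by blast+
  have AX: "A \<subseteq> X'" and BY: "B \<subseteq> Y'"
    unfolding A_def B_def by (rule down_subset, rule up_subset)
  show ?thesis
  proof
    assume "(E, F) \<in> concepts A B (K \<inter> A \<times> B)"
    then have EA: "E \<subseteq> A" and FB: "F \<subseteq> B"
      and "up (K \<inter> A \<times> B) B E = F" and "down (K \<inter> A \<times> B) A F = E"
      unfolding concepts_def by auto
    then have upE: "up K Y' E \<inter> B = F" and downF: "down K X' F \<inter> A = E"
      using up_restrict[OF EA BY] down_restrict[OF FB AX] by simp_all
    have "C \<times> F \<subseteq> K"
      using FB BY subset_up_iff[of F Y' K C] unfolding B_def by blast
    then have "C \<subseteq> down K X' F" using assms(1) subset_down_iff by blast
    with CA downF have CE: "C \<subseteq> E" by blast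
    have "E \<times> D \<subseteq> K"
      using EA AX subset_down_iff[of E X' K D] unfolding A_def by blast
    then have "D \<subseteq> up K Y' E" using assms(2) subset_up_iff by blast
    with DB upE have DF: "D \<subseteq> F" by blast
    have "up K Y' E \<subseteq> B" unfolding B_def using CE by (rule up_antimono)
    moreover have "down K X' F \<subseteq> A" unfolding A_def using DF by (rule down_antimono)
    ultimately show "(E, F) \<in> concepts X' Y' K \<and> C \<subseteq> E \<and> D \<subseteq> F"
      using upE downF EA FB AX BY CE DF unfolding concepts_def by auto
  next
    assume "(E, F) \<in> concepts X' Y' K \<and> C \<subseteq> E \<and> D \<subseteq> F"
    then have concept: "(E, F) \<in> concepts X' Y' K" and CE: "C \<subseteq> E" and DF: "D \<subseteq> F"
      by auto
    have EA: "E \<subseteq> A" unfolding A_def using concept_subset_down_iff[OF concept assms(2)] DF ..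
    have FB: "F \<subseteq> B"
      using concept up_antimono[OF CE, of K Y'] unfolding B_def concepts_def by auto
    show "(E, F) \<in> concepts A B (K \<inter> A \<times> B)"
      using concept EA FB up_restrict[OF EA BY] down_restrict[OF FB AX]
      unfolding concepts_def by auto
  qed
qed

theorem lemma3:
  fixes n m :: nat and I :: "(nat \<times> nat) set" and C D :: "nat set"
  assumes "I \<subseteq> Xs n \<times> Ys m"
    and "C \<subseteq> Xs n" and "D \<subseteq> Ys m"
    and "\<forall>i\<in>C. \<forall>j\<in>D. (i, j) \<in> I"
  shows "interval n m I C D =
    concepts (down I (Xs n) D) (up I (Ys m) C)
      {(i, j). i \<in> down I (Xs n) D \<and> j \<in> up I (Ys m) C \<and> (i, j) \<in> I}"
proof -
  have CD: "C \<times> D \<subseteq> I" using assms(4) by auto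
  have "{(i, j). i \<in> down I (Xs n) D \<and> j \<in> up I (Ys m) C \<and> (i, j) \<in> I}
      = I \<inter> down I (Xs n) D \<times> up I (Ys m) C"
    by auto
  then show ?thesis
    using interval_iff[OF assms(2,3)] concepts_restrict_iff[OF assms(2,3) CD]
    by (auto intro!: set_eqI)
qed

end
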